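(* Let $(g_n)_{n\ge 0}$ be a sequence of positive real numbers (not depending on $a$) and, for $a>0$, let \[ g(a,x)=\sum_{n=0}^{\infty} g_n\Gamma(a+n)x^n \] (a formal power series in $x$), where $\Gamma$ is Euler's gamma function. Let $b>a>0$ and $\delta>0$, and write \[ \psi_{a,b,\delta}(x)=g(a+\delta,x)g(b,x)-g(b+\delta,x)g(a,x)=\sum_{m=0}^{\infty}\psi_m x^m . \] Then $\psi_m<0$ for all $m\ge0$, so that $a\mapsto g(a,x)$ is strictly log-convex for $x>0$.
   Context: Power series are understood formally; the log-convexity statement refers to values $x>0$ at which the series converge. *)

theory Defs
  imports "HOL-Analysis.Analysis" "HOL-Computational_Algebra.Formal_Power_Series"
begin

definition gfps :: "(nat \<Rightarrow> real) \<Rightarrow> real \<Rightarrow> real fps" where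
  "gfps g a = Abs_fps (\<lambda>n. g n * Gamma (a + real n))"

definition strict_convex_on :: "real set \<Rightarrow> (real \<Rightarrow> real) \<Rightarrow> bool" where
  "strict_convex_on S f \<longleftrightarrow>
     (\<forall>x\<in>S. \<forall>y\<in>S. \<forall>t::real. x \<noteq> y \<and> 0 < t \<and> t < 1 \<longrightarrow>
        f (t * x + (1 - t) * y) < t * f x + (1 - t) * f y)"

end

theory Submission
  imports Defs
begin

text \<open>
  Since \<open>ln \<circ> \<Gamma>\<close> is strictly convex, \<open>\<Gamma>(s) \<Gamma>(p + r - s) < \<Gamma>(p) \<Gamma>(r)\<close> whenever
  \<open>p < s < r\<close>. The \<open>m\<close>-th coefficient of \<open>\<psi>\<close> is \<open>\<Sum>\<^sub>i g\<^sub>i g\<^sub>m\<^sub>-\<^sub>i (\<Gamma>(a+\<delta>+i) \<Gamma>(b+m-i) - \<Gamma>(b+\<delta>+i) \<Gamma>(a+m-i))\<close>;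
  pairing the index \<open>i\<close> with \<open>m - i\<close> reduces its sign to an inequality between two sums
  of two Gamma products, which follows from four instances of that majorization.
  Strict log-convexity of \<open>a \<mapsto> g(a,x)\<close> follows termwise from that of \<open>\<Gamma>\<close> by Young's
  inequality, i.e. Hoelder's inequality for series.
\<close>

lemma strict_convex_on_realI:
  fixes f :: "real \<Rightarrow> real"
  assumes A: "connected A"
    and deriv: "\<And>x. x \<in> A \<Longrightarrow> (f has_real_derivative f' x) (at x)"
    and mono: "\<And>x y. x \<in> A \<Longrightarrow> y \<in> A \<Longrightarrow> x < y \<Longrightarrow> f' x < f' y"
  shows "strict_convex_on A f"
proof -
  have ordered: "f ((1 - t) * x + t * y) < (1 - t) * f x + t * f y"
    if xy: "x \<in> A" "y \<in> A" "x < y" and t: "0 < t" "t < 1" for x y t :: real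
  proof -
    define z where "z = (1 - t) * x + t * y"
    have zx: "z - x = t * (y - x)" and yz: "y - z = (1 - t) * (y - x)"
      by (simp_all add: z_def algebra_simps)
    have "0 < t * (y - x)" "0 < (1 - t) * (y - x)" using xy t by simp_all
    then have "x < z" "z < y" by (simp_all flip: zx yz)
    have Icc: "{x..y} \<subseteq> A" using connected_contains_Icc[OF A xy(1,2)] .
    then have der: "(f has_real_derivative f' u) (at u)" if "x \<le> u" "u \<le> y" for u
      using deriv that by auto
    obtain \<xi> where \<xi>: "x < \<xi>" "\<xi> < z" "f z - f x = (z - x) * f' \<xi>"
      using MVT2[OF \<open>x < z\<close>, of f f'] \<open>z < y\<close> der by auto
    obtain \<eta> where \<eta>: "z < \<eta>" "\<eta> < y" "f y - f z = (y - z) * f' \<eta>"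
      using MVT2[OF \<open>z < y\<close>, of f f'] \<open>x < z\<close> der by auto
    have "f' \<xi> < f' \<eta>" using \<xi> \<eta> Icc by (intro mono) auto
    have "(f z - f x) * (1 - t) = t * (1 - t) * (y - x) * f' \<xi>"
      using \<xi>(3) zx by simp
    also have "\<dots> < t * (1 - t) * (y - x) * f' \<eta>"
      using \<open>f' \<xi> < f' \<eta>\<close> t xy by (intro mult_strict_left_mono) auto
    also have "\<dots> = (f y - f z) * t" using \<eta>(3) yz by simp
    finally show ?thesis by (simp add: z_def algebra_simps)
  qed
  show ?thesis
    unfolding strict_convex_on_def
  proof (intro ballI allI impI)
    fix x y t :: real assume "x \<in> A" "y \<in> A" and xyt: "x \<noteq> y \<and> 0 < t \<and> t < 1"
    show "f (t * x + (1 - t) * y) < t * f x + (1 - t) * f y"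
    proof (cases "x < y")
      case True
      then show ?thesis
        using ordered[of x y "1 - t"] \<open>x \<in> A\<close> \<open>y \<in> A\<close> xyt by simp
    next
      case False
      then show ?thesis
        using ordered[of y x t] \<open>x \<in> A\<close> \<open>y \<in> A\<close> xyt by (simp add: algebra_simps)
    qed
  qed
qed

lemma strict_convex_on_ln_Gamma: "strict_convex_on {0<..} (\<lambda>x::real. ln (Gamma x))"
proof (rule strict_convex_on_realI[where f' = Digamma])
  fix x :: real assume "x \<in> {0<..}"
  then show "((\<lambda>x. ln (Gamma x)) has_real_derivative Digamma x) (at x)"
    by (auto intro!: derivative_eq_intros simp: Gamma_eq_zero_iff elim!: nonpos_Ints_cases')
qed (auto intro: Digamma_real_strict_mono)

lemma strict_convex_on_two_point_lt:
  fixes f :: "real \<Rightarrow> real"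
  assumes f: "strict_convex_on A f" and A: "p \<in> A" "r \<in> A" and s: "p < s" "s < r"
  shows "f s + f (p + r - s) < f p + f r"
proof -
  define l where "l = (r - s) / (r - p)"
  have l: "0 < l" "l < 1" using s by (auto simp: l_def field_simps)
  have lr: "l * (r - p) = r - s" using s by (simp add: l_def)
  have e: "s = l * p + (1 - l) * r" and e': "p + r - s = l * r + (1 - l) * p"
    using lr by (simp_all add: algebra_simps)
  have "f s < l * f p + (1 - l) * f r"
    unfolding e using f A s l unfolding strict_convex_on_def by auto
  moreover have "f (p + r - s) < l * f r + (1 - l) * f p"
    unfolding e' using f A s l unfolding strict_convex_on_def by auto
  ultimately show ?thesis by (simp add: algebra_simps)
qed

lemma Gamma_mult_lt:
  fixes p s r :: real
  assumes "0 < p" "p < s" "s < r"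
  shows "Gamma s * Gamma (p + r - s) < Gamma p * Gamma r"
proof -
  have "ln (Gamma s) + ln (Gamma (p + r - s)) < ln (Gamma p) + ln (Gamma r)"
    using assms by (intro strict_convex_on_two_point_lt[OF strict_convex_on_ln_Gamma]) auto
  moreover have pos: "Gamma s > 0" "Gamma (p + r - s) > 0" "Gamma p > 0" "Gamma r > 0"
    using assms by auto
  ultimately have "ln (Gamma s * Gamma (p + r - s)) < ln (Gamma p * Gamma r)"
    by (simp add: ln_mult)
  then show ?thesis using pos by (subst (asm) ln_less_cancel_iff) auto
qed

lemma Gamma_mult_le:
  fixes p s r :: real
  assumes "0 < p" "p \<le> s" "s \<le> r"
  shows "Gamma s * Gamma (p + r - s) \<le> Gamma p * Gamma r"
proof (cases "p < s \<and> s < r")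
  case True
  then show ?thesis using Gamma_mult_lt[of p s r] assms by simp
next
  case False
  then have "s = p \<or> s = r" using assms by auto
  then show ?thesis by (auto simp: mult.commute)
qed

lemma Gamma_product_sum_lt:
  fixes p q c d :: real
  assumes "0 < p" "0 < q" "0 < c" "0 < d"
  shows "Gamma (p + d) * Gamma (q + c) + Gamma (q + d) * Gamma (p + c)
       < Gamma (p + c + d) * Gamma q + Gamma (q + c + d) * Gamma p"
proof -
  have ordered: "Gamma (p + d) * Gamma (q + c) + Gamma (q + d) * Gamma (p + c)
       < Gamma (p + c + d) * Gamma q + Gamma (q + c + d) * Gamma p"
    if pq: "0 < p" "p \<le> q" for p q
  proof -
    define X1 where "X1 = Gamma (p + d) * Gamma (q + c)"
    define X2 where "X2 = Gamma (q + d) * Gamma (p + c)"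
    define Y1 where "Y1 = Gamma (p + c + d) * Gamma q"
    define Y2 where "Y2 = Gamma (q + c + d) * Gamma p"
    have "X1 \<le> Y2"
      using Gamma_mult_le[of p "p + d" "q + c + d"] pq assms
      by (simp add: X1_def Y2_def algebra_simps)
    moreover have "X2 \<le> Y2"
      using Gamma_mult_le[of p "p + c" "q + c + d"] pq assms
      by (simp add: X2_def Y2_def algebra_simps)
    moreover have "X1 * X2 < Y1 * Y2"
    proof -
      have lt: "Gamma (p + d) * Gamma (p + c) < Gamma p * Gamma (p + c + d)"
        using Gamma_mult_lt[of p "p + d" "p + c + d"] pq assms by (simp add: algebra_simps)
      have le: "Gamma (q + d) * Gamma (q + c) \<le> Gamma q * Gamma (q + c + d)"
        using Gamma_mult_le[of q "q + d" "q + c + d"] pq assms by (simp add: algebra_simps)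
      have "(Gamma (p + d) * Gamma (p + c)) * (Gamma (q + d) * Gamma (q + c))
          < (Gamma p * Gamma (p + c + d)) * (Gamma q * Gamma (q + c + d))"
        by (rule mult_less_le_imp_less[OF lt le]) (use pq assms in simp_all)
      then show ?thesis by (simp add: X1_def X2_def Y1_def Y2_def algebra_simps)
    qed
    moreover have "Y2 > 0" using pq assms by (simp add: Y2_def)
    \<comment> \<open>\<open>(Y2 - X1) (Y2 - X2) \<ge> 0\<close> and \<open>X1 X2 < Y1 Y2\<close> give \<open>Y2 (X1 + X2) < Y2 (Y1 + Y2)\<close>.\<close>
    ultimately have "Y2 * (X1 + X2) < Y2 * (Y1 + Y2)"
      using mult_nonneg_nonneg[of "Y2 - X1" "Y2 - X2"] by (simp add: algebra_simps)
    then have "X1 + X2 < Y1 + Y2" using \<open>Y2 > 0\<close> by simp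
    then show ?thesis by (simp add: X1_def X2_def Y1_def Y2_def)
  qed
  show ?thesis
  proof (cases "p \<le> q")
    case True
    then show ?thesis using ordered[of p q] assms by simp
  next
    case False
    then show ?thesis using ordered[of q p] assms by simp
  qed
qed

lemma fps_nth_gfps_cross_diff_neg:
  fixes g :: "nat \<Rightarrow> real" and a b \<delta> :: real
  assumes g: "\<And>n. g n > 0" and ab: "0 < a" "a < b" and \<delta>: "0 < \<delta>"
  shows "fps_nth (gfps g (a + \<delta>) * gfps g b - gfps g (b + \<delta>) * gfps g a) m < 0"
proof -
  define T where "T = (\<lambda>i. g i * Gamma (a + \<delta> + real i) * (g (m - i) * Gamma (b + real (m - i)))
      - g i * Gamma (b + \<delta> + real i) * (g (m - i) * Gamma (a + real (m - i))))"
  have coeff: "fps_nth (gfps g (a + \<delta>) * gfps g b - gfps g (b + \<delta>) * gfps g a) m = (\<Sum>i=0..m. T i)"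
    by (simp add: fps_mult_nth gfps_def T_def sum_subtractf add_ac)
  have pair_neg: "T i + T (m - i) < 0" if "i \<le> m" for i
  proof -
    define j where "j = m - i"
    have "Gamma ((a + i) + \<delta>) * Gamma ((a + j) + (b - a)) + Gamma ((a + j) + \<delta>) * Gamma ((a + i) + (b - a))
        < Gamma ((a + i) + (b - a) + \<delta>) * Gamma (a + j) + Gamma ((a + j) + (b - a) + \<delta>) * Gamma (a + i)"
      using ab \<delta> by (intro Gamma_product_sum_lt) auto
    then have "0 < g i * g j" "Gamma (a + \<delta> + i) * Gamma (b + j) + Gamma (a + \<delta> + j) * Gamma (b + i)
        - (Gamma (b + \<delta> + i) * Gamma (a + j) + Gamma (b + \<delta> + j) * Gamma (a + i)) < 0"
      using g[of i] g[of j] by (simp_all add: algebra_simps)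
    then have "g i * g j * (Gamma (a + \<delta> + i) * Gamma (b + j) + Gamma (a + \<delta> + j) * Gamma (b + i)
        - (Gamma (b + \<delta> + i) * Gamma (a + j) + Gamma (b + \<delta> + j) * Gamma (a + i))) < 0"
      by (rule mult_pos_neg)
    moreover have "m - j = i" using that by (simp add: j_def)
    ultimately show ?thesis by (simp add: T_def j_def[symmetric] algebra_simps)
  qed
  have "2 * (\<Sum>i=0..m. T i) = (\<Sum>i=0..m. T i + T (m - i))"
    using sum.atLeastAtMost_rev[of T 0 m] by (simp add: sum.distrib)
  also have "\<dots> < 0"
    using sum_strict_mono[of "{0..m}" "\<lambda>i. T i + T (m - i)" "\<lambda>_. 0"] pair_neg by simp
  finally show ?thesis using coeff by simp
qed

lemma strict_convex_on_ln_mult_Gamma_shift: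
  fixes C k :: real
  assumes "C > 0" "k \<ge> 0"
  shows "strict_convex_on {0<..} (\<lambda>c. ln (C * Gamma (c + k)))"
  unfolding strict_convex_on_def
proof (intro ballI allI impI)
  fix u v t :: real
  assume "u \<in> {0<..}" "v \<in> {0<..}" and uvt: "u \<noteq> v \<and> 0 < t \<and> t < 1"
  define w where "w = t * u + (1 - t) * v"
  have "w + k = t * (u + k) + (1 - t) * (v + k)" by (simp add: w_def algebra_simps)
  then have "ln (Gamma (w + k)) < t * ln (Gamma (u + k)) + (1 - t) * ln (Gamma (v + k))"
    using strict_convex_on_ln_Gamma \<open>u \<in> {0<..}\<close> \<open>v \<in> {0<..}\<close> uvt assms
    unfolding strict_convex_on_def by auto
  moreover have "Gamma (w + k) > 0" "Gamma (u + k) > 0" "Gamma (v + k) > 0"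
    using \<open>u \<in> {0<..}\<close> \<open>v \<in> {0<..}\<close> uvt assms
    by (auto simp: w_def intro!: Gamma_real_pos add_pos_nonneg)
  ultimately have "ln (C * Gamma (w + k)) < t * ln (C * Gamma (u + k)) + (1 - t) * ln (C * Gamma (v + k))"
    using assms by (simp add: ln_mult algebra_simps)
  then show "ln (C * Gamma (t * u + (1 - t) * v + k))
      < t * ln (C * Gamma (u + k)) + (1 - t) * ln (C * Gamma (v + k))"
    by (simp add: w_def)
qed

lemma strict_convex_on_ln_suminf:
  fixes h :: "real \<Rightarrow> nat \<Rightarrow> real"
  assumes S: "convex S"
    and pos: "\<And>c n. c \<in> S \<Longrightarrow> h c n > 0"
    and summable: "\<And>c. c \<in> S \<Longrightarrow> summable (h c)"
    and term_convex: "\<And>n. strict_convex_on S (\<lambda>c. ln (h c n))"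
  shows "strict_convex_on S (\<lambda>c. ln (\<Sum>n. h c n))"
  unfolding strict_convex_on_def
proof (intro ballI allI impI)
  fix u v t :: real
  assume u: "u \<in> S" and v: "v \<in> S" and uvt: "u \<noteq> v \<and> 0 < t \<and> t < 1"
  define w where "w = t * u + (1 - t) * v"
  have w: "w \<in> S" using convexD[OF S u v, of t "1 - t"] uvt by (simp add: w_def)
  define A where "A = (\<Sum>n. h u n)"
  define B where "B = (\<Sum>n. h v n)"
  have A: "A > 0" unfolding A_def using summable[OF u] pos[OF u] by (rule suminf_pos)
  have B: "B > 0" unfolding B_def using summable[OF v] pos[OF v] by (rule suminf_pos)
  define K where "K = A powr t * B powr (1 - t)"
  define q where "q = (\<lambda>n. t * (h u n / A) + (1 - t) * (h v n / B))"
  \<comment> \<open>Young's inequality applied to the normalized terms \<open>h u n / A\<close> and \<open>h v n / B\<close>.\<close>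
  have term_lt: "h w n < K * q n" for n
  proof -
    have "ln (h w n) < t * ln (h u n) + (1 - t) * ln (h v n)"
      using term_convex[of n] u v uvt unfolding strict_convex_on_def w_def by blast
    then have "h w n < exp (t * ln (h u n) + (1 - t) * ln (h v n))"
      using pos[OF w] by (metis exp_less_mono exp_ln)
    also have "\<dots> = K * ((h u n / A) powr t * (h v n / B) powr (1 - t))"
      using A B pos[OF u, of n] pos[OF v, of n]
      by (simp add: K_def powr_def exp_add ln_div algebra_simps exp_diff)
    also have "\<dots> \<le> K * q n"
      unfolding q_def K_def using A B pos[OF u, of n] pos[OF v, of n] uvt
      by (intro mult_left_mono Youngs_inequality_0) auto
    finally show ?thesis .
  qed
  have "q sums (t * (A / A) + (1 - t) * (B / B))"
    unfolding q_def A_def B_def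
    using summable[OF u] summable[OF v]
    by (intro sums_add sums_mult sums_divide summable_sums)
  then have "(\<lambda>n. K * q n) sums K" using A B sums_mult by fastforce
  then have Kq: "summable (\<lambda>n. K * q n)" "(\<Sum>n. K * q n) = K" by (simp_all add: sums_iff)
  have "0 < (\<Sum>n. K * q n - h w n)"
    using term_lt by (intro suminf_pos summable_diff Kq(1) summable[OF w]) simp
  also have "\<dots> = K - (\<Sum>n. h w n)" using suminf_diff[OF Kq(1) summable[OF w]] Kq(2) by simp
  finally have "(\<Sum>n. h w n) < K" by simp
  moreover have "(\<Sum>n. h w n) > 0" using summable[OF w] pos[OF w] by (rule suminf_pos)
  ultimately have "ln (\<Sum>n. h w n) < ln K" by simp
  also have "ln K = t * ln A + (1 - t) * ln B" using A B by (simp add: K_def ln_mult ln_powr)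
  finally show "ln (\<Sum>n. h (t * u + (1 - t) * v) n) < t * ln (\<Sum>n. h u n) + (1 - t) * ln (\<Sum>n. h v n)"
    by (simp add: w_def A_def B_def)
qed

theorem theorem2:
  fixes g :: "nat \<Rightarrow> real" and a b \<delta> :: real
  assumes gpos: "\<And>n. g n > 0"
    and ab: "0 < a" "a < b" and d: "0 < \<delta>"
  shows "(\<forall>m. fps_nth (gfps g (a + \<delta>) * gfps g b - gfps g (b + \<delta>) * gfps g a) m < 0)
       \<and> (\<forall>x::real. x > 0 \<and> (\<forall>c>0. summable (\<lambda>n. g n * Gamma (c + real n) * x ^ n)) \<longrightarrow>
            strict_convex_on {0<..} (\<lambda>c. ln (\<Sum>n. g n * Gamma (c + real n) * x ^ n)))"
proof (intro conjI allI impI)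
  fix m
  show "fps_nth (gfps g (a + \<delta>) * gfps g b - gfps g (b + \<delta>) * gfps g a) m < 0"
    using fps_nth_gfps_cross_diff_neg[OF gpos ab d] .
next
  fix x :: real
  assume x: "x > 0 \<and> (\<forall>c>0. summable (\<lambda>n. g n * Gamma (c + real n) * x ^ n))"
  have "strict_convex_on {0<..} (\<lambda>c. ln (g n * x ^ n * Gamma (c + real n)))" for n
    using gpos[of n] x by (intro strict_convex_on_ln_mult_Gamma_shift) auto
  then show "strict_convex_on {0<..} (\<lambda>c. ln (\<Sum>n. g n * Gamma (c + real n) * x ^ n))"
    using gpos x by (intro strict_convex_on_ln_suminf) (auto simp: ac_simps)
qed

end
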